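(* Let $P,Q,R\in W^{(l)}\setminus\{0\}$ with $[P,Q]_{\rho,\sigma}=\ell_{\rho,\sigma}(R)$, where $(\rho,\sigma)\in\mathfrak V$ and $\sigma\le0$. (1) If $\mathrm{st}_{\rho,\sigma}(P)$ and $\mathrm{st}_{\rho,\sigma}(Q)$ are not aligned, then $\mathrm{st}_{\rho,\sigma}(P)+\mathrm{st}_{\rho,\sigma}(Q)-(1,1)=\mathrm{st}_{\rho,\sigma}(R)$. (2) If $\mathrm{en}_{\rho,\sigma}(P)$ and $\mathrm{en}_{\rho,\sigma}(Q)$ are not aligned, then $\mathrm{en}_{\rho,\sigma}(P)+\mathrm{en}_{\rho,\sigma}(Q)-(1,1)=\mathrm{en}_{\rho,\sigma}(R)$.
   Context: $K$ is a field of characteristic zero, $l\in\mathbb{N}$. $W^{(l)}$ is the associative $K$-algebra with $K$-basis $\{X^{i/l}Y^j:i\in\mathbb{Z},j\in\mathbb{N}_0\}$, powers of $X$ multiplying as Laurent monomials and $[Y,X^\alpha]=\alpha X^{\alpha-1}$ for $\alpha\in\frac1l\mathbb{Z}$. $\Psi^{(l)}(X^{i/l}Y^j)=x^{i/l}y^j\in K[x^{\pm1/l},y]$ ($K$-linear); supports are sets of exponents with nonzero coefficient. $\mathfrak V=\{(\rho,\sigma)\in\mathbb{Z}^2:\gcd(\rho,\sigma)=1,\rho+\sigma>0\}$. For $P\ne0$, $v_{\rho,\sigma}(P)=\max\{\rho a+\sigma b:(a,b)\in\mathrm{Supp}(P)\}$, $\ell_{\rho,\sigma}(P)$ = sum of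 terms of $\Psi^{(l)}(P)$ attaining it. $\mathrm{st}_{\rho,\sigma}(P)$: among points $(a,b)\in\mathrm{Supp}(\ell_{\rho,\sigma}(P))$ maximizing $a-b$, the one with largest $a$; $\mathrm{en}_{\rho,\sigma}(P)$: among those maximizing $b-a$, the one with largest $b$. $[P,Q]_{\rho,\sigma}:=0$ if $[P,Q]=0$ or $v_{\rho,\sigma}([P,Q])<v_{\rho,\sigma}(P)+v_{\rho,\sigma}(Q)-(\rho+\sigma)$, and $:=\ell_{\rho,\sigma}([P,Q])$ otherwise. Vectors $(a_1,a_2),(b_1,b_2)$ are aligned if $a_1b_2-a_2b_1=0$. *)

theory Defs
  imports Complex_Main "HOL-Library.Product_Plus"
begin

text \<open>An element of W^(l) is a finitely supported coefficient function
  c :: int \<times> nat \<Rightarrow> 'a, where c (i,j) is the coefficient of X^(i/l) Y^j.\<close>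

definition wsupp :: "(int \<times> nat \<Rightarrow> 'a::zero) \<Rightarrow> (int \<times> nat) set" where
  "wsupp P = {k. P k \<noteq> 0}"

definition is_W :: "(int \<times> nat \<Rightarrow> 'a::zero) \<Rightarrow> bool" where
  "is_W P \<longleftrightarrow> finite (wsupp P)"

text \<open>Y^j X^(i/l) = sum_m (j choose m) (i/l)(i/l-1)...(i/l-m+1) X^(i/l - m) Y^(j-m).\<close>
definition wcoef :: "nat \<Rightarrow> int \<Rightarrow> nat \<Rightarrow> nat \<Rightarrow> 'a::field_char_0" where
  "wcoef l i j m = of_nat (j choose m) *
      of_rat (\<Prod>t<m. (of_int i / of_nat l - of_nat t :: rat))"

definition wmult :: "nat \<Rightarrow> (int \<times> nat \<Rightarrow> 'a::field_char_0) \<Rightarrow> (int \<times> nat \<Rightarrow> 'a)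
    \<Rightarrow> (int \<times> nat \<Rightarrow> 'a)" where
  "wmult l P Q = (\<lambda>k. \<Sum>p\<in>wsupp P. \<Sum>q\<in>wsupp Q. \<Sum>m\<in>{..snd p}.
      (if (fst p + fst q - int m * int l, snd p - m + snd q) = k
       then P p * Q q * wcoef l (fst q) (snd p) m else 0))"

definition wcomm :: "nat \<Rightarrow> (int \<times> nat \<Rightarrow> 'a::field_char_0) \<Rightarrow> (int \<times> nat \<Rightarrow> 'a)
    \<Rightarrow> (int \<times> nat \<Rightarrow> 'a)" where
  "wcomm l P Q = (\<lambda>k. wmult l P Q k - wmult l Q P k)"

definition wpt :: "nat \<Rightarrow> int \<times> nat \<Rightarrow> rat \<times> rat" where
  "wpt l k = (of_int (fst k) / of_nat l, of_nat (snd k))"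

definition Supp :: "nat \<Rightarrow> (int \<times> nat \<Rightarrow> 'a::zero) \<Rightarrow> (rat \<times> rat) set" where
  "Supp l P = wpt l ` wsupp P"

definition wval :: "int \<Rightarrow> int \<Rightarrow> rat \<times> rat \<Rightarrow> rat" where
  "wval \<rho> \<sigma> p = of_int \<rho> * fst p + of_int \<sigma> * snd p"

definition vdeg :: "nat \<Rightarrow> int \<Rightarrow> int \<Rightarrow> (int \<times> nat \<Rightarrow> 'a::zero) \<Rightarrow> rat" where
  "vdeg l \<rho> \<sigma> P = Max (wval \<rho> \<sigma> ` Supp l P)"

text \<open>Leading form ell_{rho,sigma}(P) (as coefficient function, i.e. via the
  injective map Psi^(l)).\<close>
definition lead :: "nat \<Rightarrow> int \<Rightarrow> int \<Rightarrow> (int \<times> nat \<Rightarrow> 'a::zero) \<Rightarrow> (int \<times> nat \<Rightarrow> 'a)" where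
  "lead l \<rho> \<sigma> P = (\<lambda>k. if wval \<rho> \<sigma> (wpt l k) = vdeg l \<rho> \<sigma> P then P k else 0)"

definition st_of :: "(rat \<times> rat) set \<Rightarrow> rat \<times> rat" where
  "st_of S = (THE p. p \<in> S \<and> (\<forall>q\<in>S. fst q - snd q \<le> fst p - snd p) \<and>
       (\<forall>q\<in>S. fst q - snd q = fst p - snd p \<longrightarrow> fst q \<le> fst p))"

definition en_of :: "(rat \<times> rat) set \<Rightarrow> rat \<times> rat" where
  "en_of S = (THE p. p \<in> S \<and> (\<forall>q\<in>S. snd q - fst q \<le> snd p - fst p) \<and>
       (\<forall>q\<in>S. snd q - fst q = snd p - fst p \<longrightarrow> snd q \<le> snd p))"

definition wst :: "nat \<Rightarrow> int \<Rightarrow> int \<Rightarrow> (int \<times> nat \<Rightarrow> 'a::zero) \<Rightarrow> rat \<times> rat" where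
  "wst l \<rho> \<sigma> P = st_of (Supp l (lead l \<rho> \<sigma> P))"

definition wen :: "nat \<Rightarrow> int \<Rightarrow> int \<Rightarrow> (int \<times> nat \<Rightarrow> 'a::zero) \<Rightarrow> rat \<times> rat" where
  "wen l \<rho> \<sigma> P = en_of (Supp l (lead l \<rho> \<sigma> P))"

definition wbracket :: "nat \<Rightarrow> int \<Rightarrow> int \<Rightarrow> (int \<times> nat \<Rightarrow> 'a::field_char_0)
    \<Rightarrow> (int \<times> nat \<Rightarrow> 'a) \<Rightarrow> (int \<times> nat \<Rightarrow> 'a)" where
  "wbracket l \<rho> \<sigma> P Q =
     (if wcomm l P Q = (\<lambda>_. 0) \<or>
         vdeg l \<rho> \<sigma> (wcomm l P Q) < vdeg l \<rho> \<sigma> P + vdeg l \<rho> \<sigma> Q - of_int (\<rho> + \<sigma>)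
      then (\<lambda>_. 0) else lead l \<rho> \<sigma> (wcomm l P Q))"

definition aligned :: "rat \<times> rat \<Rightarrow> rat \<times> rat \<Rightarrow> bool" where
  "aligned a b \<longleftrightarrow> fst a * snd b - snd a * fst b = 0"

end

theory Submission
  imports Defs
begin

text \<open>In a product \<open>X\<^sup>a Y\<^sup>b \<cdot> X\<^sup>c Y\<^sup>d\<close> the \<open>m\<close>-th term of the normal
  ordering has weight \<open>v(a,b) + v(c,d) - m(\<rho> + \<sigma>)\<close>. The \<open>m = 0\<close> terms cancel in the
  commutator, so \<open>[P, Q]\<close> has weight at most \<open>v(P) + v(Q) - (\<rho> + \<sigma>)\<close>, and in that
  weight only \<open>m = 1\<close> terms of leading monomials of \<open>P\<close> and \<open>Q\<close> contribute. Since
  \<open>\<rho> > 0\<close>, the start (end) point of a leading form is its monomial of least (greatest)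
  \<open>Y\<close>-degree. Pairing the extreme monomials of \<open>P\<close> and \<open>Q\<close> is the only way to reach
  the extreme \<open>Y\<close>-degree \<open>b + d - 1\<close>, and the resulting coefficient is a nonzero
  multiple of \<open>bc - ad\<close>, the alignment determinant. Hence the bracket is the top part of
  \<open>[P, Q]\<close>, and its extreme point is \<open>st(P) + st(Q) - (1, 1)\<close>.\<close>

lemma line_diagonal_decreasing:
  fixes r t V :: rat and p q :: "rat \<times> rat"
  assumes "r > 0" "r + t > 0" "r * fst p + t * snd p = V" "r * fst q + t * snd q = V"
    "snd p \<le> snd q"
  shows "fst q - snd q \<le> fst p - snd p"
    and "fst q - snd q = fst p - snd p \<Longrightarrow> q = p"
proof -
  have diag: "r * ((fst q - snd q) - (fst p - snd p)) = - ((r + t) * (snd q - snd p))"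
    using assms(3,4) by (simp add: algebra_simps)
  have "(r + t) * (snd q - snd p) \<ge> 0"
    using assms(2,5) by simp
  with diag have "r * ((fst q - snd q) - (fst p - snd p)) \<le> 0"
    by simp
  with assms(1) show "fst q - snd q \<le> fst p - snd p"
    by (simp add: mult_le_0_iff)
  assume eq: "fst q - snd q = fst p - snd p"
  with diag assms(2) have "snd q = snd p" by simp
  with eq show "q = p" by (simp add: prod_eq_iff)
qed

lemma st_of_line:
  fixes r t V :: rat
  assumes "r > 0" "r + t > 0" "\<forall>p\<in>S. r * fst p + t * snd p = V"
    "p0 \<in> S" "\<forall>p\<in>S. snd p0 \<le> snd p"
  shows "st_of S = p0"
  unfolding st_of_def
proof (rule the_equality)
  have mono: "fst p - snd p \<le> fst p0 - snd p0"
    "fst p - snd p = fst p0 - snd p0 \<Longrightarrow> p = p0" if "p \<in> S" for p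
    using line_diagonal_decreasing[OF assms(1,2), of p0 V p] assms(3-5) that by auto
  show "p0 \<in> S \<and> (\<forall>q\<in>S. fst q - snd q \<le> fst p0 - snd p0) \<and>
      (\<forall>q\<in>S. fst q - snd q = fst p0 - snd p0 \<longrightarrow> fst q \<le> fst p0)"
    using assms(4) mono by auto
  fix p assume "p \<in> S \<and> (\<forall>q\<in>S. fst q - snd q \<le> fst p - snd p) \<and>
      (\<forall>q\<in>S. fst q - snd q = fst p - snd p \<longrightarrow> fst q \<le> fst p)"
  with assms(4) mono show "p = p0"
    by (meson order_antisym)
qed

lemma en_of_line:
  fixes r t V :: rat
  assumes "r > 0" "r + t > 0" "\<forall>p\<in>S. r * fst p + t * snd p = V"
    "p0 \<in> S" "\<forall>p\<in>S. snd p \<le> snd p0"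
  shows "en_of S = p0"
  unfolding en_of_def
proof (rule the_equality)
  have mono: "snd p - fst p \<le> snd p0 - fst p0"
    "snd p - fst p = snd p0 - fst p0 \<Longrightarrow> p = p0" if "p \<in> S" for p
    using line_diagonal_decreasing[OF assms(1,2), of p V p0] assms(3-5) that by auto
  show "p0 \<in> S \<and> (\<forall>q\<in>S. snd q - fst q \<le> snd p0 - fst p0) \<and>
      (\<forall>q\<in>S. snd q - fst q = snd p0 - fst p0 \<longrightarrow> snd q \<le> snd p0)"
    using assms(4) mono by auto
  fix p assume "p \<in> S \<and> (\<forall>q\<in>S. snd q - fst q \<le> snd p - fst p) \<and>
      (\<forall>q\<in>S. snd q - fst q = snd p - fst p \<longrightarrow> snd q \<le> snd p)"
  with assms(4) mono show "p = p0"
    by (meson order_antisym)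
qed

definition wval_at :: "nat \<Rightarrow> int \<Rightarrow> int \<Rightarrow> int \<times> nat \<Rightarrow> rat" where
  "wval_at l \<rho> \<sigma> k = wval \<rho> \<sigma> (wpt l k)"

lemma wval_at_eq:
  "wval_at l \<rho> \<sigma> k = of_int \<rho> * (of_int (fst k) / of_nat l) + of_int \<sigma> * of_nat (snd k)"
  by (simp add: wval_at_def wval_def wpt_def)

lemma wval_at_shift:
  assumes "l > 0" "m \<le> snd p"
  shows "wval_at l \<rho> \<sigma> (fst p + fst q - int m * int l, snd p - m + snd q)
       = wval_at l \<rho> \<sigma> p + wval_at l \<rho> \<sigma> q - of_nat m * of_int (\<rho> + \<sigma>)"
proof -
  have "(of_int (fst p + fst q - int m * int l) / of_nat l :: rat)
        = of_int (fst p) / of_nat l + of_int (fst q) / of_nat l - of_nat m"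
    using assms(1) by (simp add: field_simps)
  moreover have "(of_nat (snd p - m + snd q) :: rat) = of_nat (snd p) - of_nat m + of_nat (snd q)"
    using assms(2) by (simp add: of_nat_diff)
  ultimately have "wval_at l \<rho> \<sigma> (fst p + fst q - int m * int l, snd p - m + snd q)
     = of_int \<rho> * (of_int (fst p) / of_nat l + of_int (fst q) / of_nat l - of_nat m)
       + of_int \<sigma> * (of_nat (snd p) - of_nat m + of_nat (snd q))"
    by (simp only: wval_at_eq fst_conv snd_conv)
  then show ?thesis
    by (simp add: wval_at_eq algebra_simps)
qed

lemma wval_at_le_vdeg:
  assumes "finite (wsupp F)" "F k \<noteq> 0"
  shows "wval_at l \<rho> \<sigma> k \<le> vdeg l \<rho> \<sigma> F"
  unfolding vdeg_def wval_at_def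
  by (rule Max_ge) (use assms in \<open>auto simp: Supp_def wsupp_def\<close>)

lemma vdeg_eqI:
  assumes "finite (wsupp F)" "F k \<noteq> 0" "wval_at l \<rho> \<sigma> k = V"
    "\<And>k'. F k' \<noteq> 0 \<Longrightarrow> wval_at l \<rho> \<sigma> k' \<le> V"
  shows "vdeg l \<rho> \<sigma> F = V"
  unfolding vdeg_def
  by (rule Max_eqI) (use assms in \<open>auto simp: Supp_def wsupp_def wval_at_def\<close>)

lemma wsupp_lead:
  "wsupp (lead l \<rho> \<sigma> F) = {k. F k \<noteq> 0 \<and> wval_at l \<rho> \<sigma> k = vdeg l \<rho> \<sigma> F}"
  by (auto simp: wsupp_def lead_def wval_at_def)

lemma wsupp_lead_subset: "wsupp (lead l \<rho> \<sigma> F) \<subseteq> wsupp F"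
  by (auto simp: wsupp_def lead_def)

lemma wsupp_lead_nonempty:
  assumes "finite (wsupp F)" "F \<noteq> (\<lambda>_. 0)"
  shows "wsupp (lead l \<rho> \<sigma> F) \<noteq> {}"
proof -
  have "vdeg l \<rho> \<sigma> F \<in> wval \<rho> \<sigma> ` Supp l F"
    unfolding vdeg_def by (rule Max_in) (use assms in \<open>auto simp: Supp_def wsupp_def\<close>)
  then obtain k where "F k \<noteq> 0" "wval_at l \<rho> \<sigma> k = vdeg l \<rho> \<sigma> F"
    by (auto simp: Supp_def wsupp_def wval_at_def)
  then show ?thesis
    unfolding wsupp_lead by blast
qed

definition extreme_y :: "int \<Rightarrow> (int \<times> nat) set \<Rightarrow> int \<times> nat \<Rightarrow> bool" where
  "extreme_y s K k \<longleftrightarrow> k \<in> K \<and> (\<forall>k'\<in>K. s * int (snd k) \<le> s * int (snd k'))"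

lemma ex_extreme_y:
  assumes "finite K" "K \<noteq> {}"
  shows "\<exists>k. extreme_y s K k"
proof -
  obtain k where "k \<in> K" "\<not> (\<exists>k'\<in>K. s * int (snd k') < s * int (snd k))"
    using arg_min_if_finite[OF assms, of "\<lambda>k. s * int (snd k)"] by blast
  then show ?thesis
    unfolding extreme_y_def by (meson not_le)
qed

lemma ex_extreme_y_lead:
  assumes "finite (wsupp F)" "F \<noteq> (\<lambda>_. 0)"
  shows "\<exists>k. extreme_y s (wsupp (lead l \<rho> \<sigma> F)) k"
proof (rule ex_extreme_y)
  show "finite (wsupp (lead l \<rho> \<sigma> F))"
    by (rule finite_subset[OF wsupp_lead_subset assms(1)])
qed (rule wsupp_lead_nonempty[OF assms])

lemma Supp_lead_on_line:
  "\<forall>p\<in>Supp l (lead l \<rho> \<sigma> F). of_int \<rho> * fst p + of_int \<sigma> * snd p = vdeg l \<rho> \<sigma> F"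
  by (auto simp: Supp_def wsupp_lead wval_at_def wval_def)

lemma wst_eq_extreme:
  assumes "\<rho> > 0" "\<rho> + \<sigma> > 0" "extreme_y 1 (wsupp (lead l \<rho> \<sigma> F)) k"
  shows "wst l \<rho> \<sigma> F = wpt l k"
  unfolding wst_def
  by (rule st_of_line[OF _ _ Supp_lead_on_line])
    (use assms in \<open>auto simp: extreme_y_def Supp_def wpt_def\<close>)

lemma wen_eq_extreme:
  assumes "\<rho> > 0" "\<rho> + \<sigma> > 0" "extreme_y (-1) (wsupp (lead l \<rho> \<sigma> F)) k"
  shows "wen l \<rho> \<sigma> F = wpt l k"
  unfolding wen_def
  by (rule en_of_line[OF _ _ Supp_lead_on_line])
    (use assms in \<open>auto simp: extreme_y_def Supp_def wpt_def\<close>)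

lemma wval_at_inj_on_row:
  assumes "l > 0" "\<rho> \<noteq> 0" "wval_at l \<rho> \<sigma> k = wval_at l \<rho> \<sigma> k'" "snd k = snd k'"
  shows "k = k'"
proof -
  have "of_int \<rho> * (of_int (fst k) / of_nat l) = (of_int \<rho> * (of_int (fst k') / of_nat l) :: rat)"
    using assms(3,4) by (simp add: wval_at_eq)
  with assms(1,2,4) show ?thesis
    by (simp add: prod_eq_iff)
qed

definition wmult_term :: "nat \<Rightarrow> (int \<times> nat \<Rightarrow> 'a::field_char_0) \<Rightarrow> (int \<times> nat \<Rightarrow> 'a)
    \<Rightarrow> int \<times> nat \<Rightarrow> int \<times> nat \<Rightarrow> int \<times> nat \<Rightarrow> nat \<Rightarrow> 'a" where
  "wmult_term l P Q k p q m =
     (if (fst p + fst q - int m * int l, snd p - m + snd q) = k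
      then P p * Q q * wcoef l (fst q) (snd p) m else 0)"

definition wmult_tail :: "nat \<Rightarrow> (int \<times> nat \<Rightarrow> 'a::field_char_0) \<Rightarrow> (int \<times> nat \<Rightarrow> 'a)
    \<Rightarrow> int \<times> nat \<Rightarrow> 'a" where
  "wmult_tail l P Q k = (\<Sum>p\<in>wsupp P. \<Sum>q\<in>wsupp Q. \<Sum>m\<in>{1..snd p}. wmult_term l P Q k p q m)"

lemma wmult_eq_sum_terms:
  "wmult l P Q k = (\<Sum>p\<in>wsupp P. \<Sum>q\<in>wsupp Q. \<Sum>m\<le>snd p. wmult_term l P Q k p q m)"
  by (simp add: wmult_def wmult_term_def)

lemma wcoef_zero: "wcoef l i j 0 = 1"
  by (simp add: wcoef_def)

text \<open>The \<open>m = 0\<close> terms of \<open>PQ\<close> and \<open>QP\<close> are the same commutative products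
  \<open>P p \<cdot> Q q \<cdot> X\<^bsup>(i+i')/l\<^esup> Y\<^bsup>j+j'\<^esup>\<close>, so they cancel in the commutator.\<close>
lemma wcomm_eq_tail_diff:
  assumes "finite (wsupp P)" "finite (wsupp Q)"
  shows "wcomm l P Q k = wmult_tail l P Q k - wmult_tail l Q P k"
proof -
  have split: "wmult l A B k
      = (\<Sum>p\<in>wsupp A. \<Sum>q\<in>wsupp B. wmult_term l A B k p q 0) + wmult_tail l A B k"
    for A B :: "int \<times> nat \<Rightarrow> 'a"
  proof -
    have "{..n} = insert 0 {1..n}" for n :: nat by auto
    then show ?thesis
      by (simp add: wmult_eq_sum_terms wmult_tail_def sum.distrib)
  qed
  have "(\<Sum>p\<in>wsupp P. \<Sum>q\<in>wsupp Q. wmult_term l P Q k p q 0)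
      = (\<Sum>q\<in>wsupp Q. \<Sum>p\<in>wsupp P. wmult_term l Q P k q p 0)"
    by (subst sum.swap) (intro sum.cong refl, simp add: wmult_term_def wcoef_zero ac_simps)
  then show ?thesis
    by (simp add: wcomm_def split)
qed

lemma wmult_term_nonzeroD:
  assumes "wmult_term l P Q k p q m \<noteq> 0"
  shows "P p \<noteq> 0" "Q q \<noteq> 0" "m \<le> snd p"
    "k = (fst p + fst q - int m * int l, snd p - m + snd q)"
  using assms by (auto simp: wmult_term_def wcoef_def split: if_splits)

lemma wmult_term_weight_le:
  assumes "l > 0" "finite (wsupp P)" "finite (wsupp Q)" "wmult_term l P Q k p q m \<noteq> 0"
  shows "wval_at l \<rho> \<sigma> k \<le> vdeg l \<rho> \<sigma> P + vdeg l \<rho> \<sigma> Q - of_nat m * of_int (\<rho> + \<sigma>)"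
proof -
  note nz = wmult_term_nonzeroD[OF assms(4)]
  have "wval_at l \<rho> \<sigma> p \<le> vdeg l \<rho> \<sigma> P" "wval_at l \<rho> \<sigma> q \<le> vdeg l \<rho> \<sigma> Q"
    using wval_at_le_vdeg assms(2,3) nz(1,2) by blast+
  with wval_at_shift[OF assms(1) nz(3)] nz(4) show ?thesis
    by simp
qed

lemma wmult_term_at_top:
  assumes "l > 0" "\<rho> + \<sigma> > 0" "finite (wsupp P)" "finite (wsupp Q)"
    "wval_at l \<rho> \<sigma> k = vdeg l \<rho> \<sigma> P + vdeg l \<rho> \<sigma> Q - of_int (\<rho> + \<sigma>)"
    "wmult_term l P Q k p q m \<noteq> 0" "1 \<le> m"
  shows "m = 1" "1 \<le> snd p" "p \<in> wsupp (lead l \<rho> \<sigma> P)" "q \<in> wsupp (lead l \<rho> \<sigma> Q)"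
    "k = (fst p + fst q - int l, snd p + snd q - 1)"
proof -
  note nz = wmult_term_nonzeroD[OF assms(6)]
  have "of_nat m * of_int (\<rho> + \<sigma>) \<le> (of_int (\<rho> + \<sigma>) :: rat)"
    using wmult_term_weight_le[OF assms(1,3,4,6), of \<rho> \<sigma>] assms(5) by simp
  with assms(2,7) show "m = 1"
    by (simp add: mult_le_cancel_right2)
  with nz(3) show "1 \<le> snd p" by simp
  have "wval_at l \<rho> \<sigma> p \<le> vdeg l \<rho> \<sigma> P" "wval_at l \<rho> \<sigma> q \<le> vdeg l \<rho> \<sigma> Q"
    using wval_at_le_vdeg assms(3,4) nz(1,2) by blast+
  with wval_at_shift[OF assms(1) nz(3)] nz(4) assms(5) \<open>m = 1\<close>
  have "wval_at l \<rho> \<sigma> p = vdeg l \<rho> \<sigma> P" "wval_at l \<rho> \<sigma> q = vdeg l \<rho> \<sigma> Q"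
    by simp_all
  with nz(1,2) show "p \<in> wsupp (lead l \<rho> \<sigma> P)" "q \<in> wsupp (lead l \<rho> \<sigma> Q)"
    by (simp_all add: wsupp_lead)
  show "k = (fst p + fst q - int l, snd p + snd q - 1)"
    using nz(4) \<open>m = 1\<close> \<open>1 \<le> snd p\<close> by simp
qed

lemma wmult_tail_weight_le:
  assumes "l > 0" "\<rho> + \<sigma> > 0" "finite (wsupp P)" "finite (wsupp Q)" "wmult_tail l P Q k \<noteq> 0"
  shows "wval_at l \<rho> \<sigma> k \<le> vdeg l \<rho> \<sigma> P + vdeg l \<rho> \<sigma> Q - of_int (\<rho> + \<sigma>)"
proof -
  obtain p q m where "m \<in> {1..snd p}" and nz: "wmult_term l P Q k p q m \<noteq> 0"
    using assms(5) unfolding wmult_tail_def by (elim sum.not_neutral_contains_not_neutral)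
  then have "1 * of_int (\<rho> + \<sigma>) \<le> of_nat m * (of_int (\<rho> + \<sigma>) :: rat)"
    using assms(2) by (intro mult_right_mono) auto
  with wmult_term_weight_le[OF assms(1,3,4) nz, of \<rho> \<sigma>] show ?thesis
    by simp
qed

lemma wmult_tail_at_top:
  assumes "l > 0" "\<rho> + \<sigma> > 0" "finite (wsupp P)" "finite (wsupp Q)"
    "wval_at l \<rho> \<sigma> k = vdeg l \<rho> \<sigma> P + vdeg l \<rho> \<sigma> Q - of_int (\<rho> + \<sigma>)"
  shows "wmult_tail l P Q k = (\<Sum>p\<in>wsupp P. \<Sum>q\<in>wsupp Q. wmult_term l P Q k p q 1)"
  unfolding wmult_tail_def
proof (intro sum.cong refl)
  fix p q
  note at_top = wmult_term_at_top[OF assms, of p q]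
  have "(\<Sum>m\<in>{1..snd p}. wmult_term l P Q k p q m)
      = (\<Sum>m\<in>{1..snd p}. if m = 1 then wmult_term l P Q k p q 1 else 0)"
    using at_top(1) by (intro sum.cong refl) fastforce
  also have "\<dots> = wmult_term l P Q k p q 1"
    using at_top(2) by fastforce
  finally show "(\<Sum>m\<in>{1..snd p}. wmult_term l P Q k p q m) = wmult_term l P Q k p q 1" .
qed

lemma wcomm_weight_le:
  assumes "l > 0" "\<rho> + \<sigma> > 0" "finite (wsupp P)" "finite (wsupp Q)" "wcomm l P Q k \<noteq> 0"
  shows "wval_at l \<rho> \<sigma> k \<le> vdeg l \<rho> \<sigma> P + vdeg l \<rho> \<sigma> Q - of_int (\<rho> + \<sigma>)"
proof -
  have "wmult_tail l P Q k \<noteq> 0 \<or> wmult_tail l Q P k \<noteq> 0"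
    using assms(5) by (auto simp: wcomm_eq_tail_diff[OF assms(3,4)])
  then show ?thesis
    using wmult_tail_weight_le[OF assms(1-4), where k = k]
      wmult_tail_weight_le[OF assms(1,2,4,3), where k = k]
    by (auto simp: add.commute)
qed

lemma wcomm_at_top:
  assumes "l > 0" "\<rho> + \<sigma> > 0" "finite (wsupp P)" "finite (wsupp Q)"
    "wval_at l \<rho> \<sigma> k = vdeg l \<rho> \<sigma> P + vdeg l \<rho> \<sigma> Q - of_int (\<rho> + \<sigma>)"
  shows "wcomm l P Q k = (\<Sum>p\<in>wsupp P. \<Sum>q\<in>wsupp Q. wmult_term l P Q k p q 1)
    - (\<Sum>q\<in>wsupp Q. \<Sum>p\<in>wsupp P. wmult_term l Q P k q p 1)"
  using assms wmult_tail_at_top[OF assms(1-4)] wmult_tail_at_top[OF assms(1,2,4,3)]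
  by (simp add: wcomm_eq_tail_diff add.commute)

lemma wcomm_finite:
  assumes "finite (wsupp P)" "finite (wsupp Q)"
  shows "finite (wsupp (wcomm l P Q))"
proof -
  have "finite (wsupp (wmult l A B))" if "finite (wsupp A)" "finite (wsupp B)"
    for A B :: "int \<times> nat \<Rightarrow> 'a"
  proof (rule finite_subset)
    show "wsupp (wmult l A B) \<subseteq> (\<lambda>(p, q, m). (fst p + fst q - int m * int l, snd p - m + snd q))
        ` (SIGMA p:wsupp A. wsupp B \<times> {..snd p})"
    proof
      fix k assume "k \<in> wsupp (wmult l A B)"
      then obtain p q m where "p \<in> wsupp A" "q \<in> wsupp B" "m \<in> {..snd p}"
        and nz: "wmult_term l A B k p q m \<noteq> 0"
        unfolding wsupp_def mem_Collect_eq wmult_eq_sum_terms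
        by (elim sum.not_neutral_contains_not_neutral) (auto simp: wsupp_def)
      then show "k \<in> (\<lambda>(p, q, m). (fst p + fst q - int m * int l, snd p - m + snd q))
          ` (SIGMA p:wsupp A. wsupp B \<times> {..snd p})"
        by (intro rev_image_eqI[of "(p, q, m)"]) (auto simp: wmult_term_nonzeroD(4)[OF nz])
    qed
  qed (use that in auto)
  moreover have "wsupp (wcomm l P Q) \<subseteq> wsupp (wmult l P Q) \<union> wsupp (wmult l Q P)"
    by (auto simp: wsupp_def wcomm_def)
  ultimately show ?thesis
    using assms finite_subset by blast
qed

lemma sum_sum_eq_single:
  assumes "finite A" "finite B" "a \<in> A" "b \<in> B"
    "\<And>x y. x \<in> A \<Longrightarrow> y \<in> B \<Longrightarrow> (x, y) \<noteq> (a, b) \<Longrightarrow> f x y = 0"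
  shows "(\<Sum>x\<in>A. \<Sum>y\<in>B. f x y) = f a b"
proof -
  have "(\<Sum>y\<in>B. f x y) = (if x = a then f a b else 0)" if "x \<in> A" for x
  proof (cases "x = a")
    case True
    then have "(\<Sum>y\<in>B. f x y) = (\<Sum>y\<in>B. if y = b then f a b else 0)"
      using assms(5) that by (intro sum.cong) auto
    with True assms(2,4) show ?thesis
      by simp
  qed (use assms(5) that in simp)
  then have "(\<Sum>x\<in>A. \<Sum>y\<in>B. f x y) = (\<Sum>x\<in>A. if x = a then f a b else 0)"
    by (rule sum.cong[OF refl])
  with assms(1,3) show ?thesis
    by simp
qed

text \<open>The index of the top-weight term of \<open>[X\<^bsup>a/l\<^esup> Y\<^sup>b, X\<^bsup>c/l\<^esup> Y\<^sup>d]\<close>.\<close>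
definition wcorner :: "nat \<Rightarrow> int \<times> nat \<Rightarrow> int \<times> nat \<Rightarrow> int \<times> nat" where
  "wcorner l p q = (fst p + fst q - int l, snd p + snd q - 1)"

lemma wcorner_commute: "wcorner l p q = wcorner l q p"
  by (simp add: wcorner_def ac_simps)

lemma wmult_term_corner:
  "wmult_term l P Q (wcorner l p q) p q 1
     = P p * Q q * (of_nat (snd p) * of_rat (of_int (fst q) / of_nat l))"
  by (cases "snd p = 0") (auto simp: wmult_term_def wcorner_def wcoef_def)

context
  fixes l :: nat and \<rho> \<sigma> s :: int and P Q :: "int \<times> nat \<Rightarrow> 'a::field_char_0"
    and p0 q0 :: "int \<times> nat"
  assumes l_pos: "l > 0" and rho_pos: "\<rho> > 0" and weight_pos: "\<rho> + \<sigma> > 0"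
    and fin_P: "finite (wsupp P)" and fin_Q: "finite (wsupp Q)" and s_nonzero: "s \<noteq> 0"
    and p0: "extreme_y s (wsupp (lead l \<rho> \<sigma> P)) p0"
    and q0: "extreme_y s (wsupp (lead l \<rho> \<sigma> Q)) q0"
    and not_aligned: "\<not> aligned (wpt l p0) (wpt l q0)"
begin

lemma snd_corner: "int (snd (wcorner l p0 q0)) = int (snd p0) + int (snd q0) - 1"
proof -
  have "1 \<le> snd p0 + snd q0"
    using not_aligned by (cases "snd p0 + snd q0") (auto simp: aligned_def wpt_def)
  then show ?thesis
    by (simp add: wcorner_def of_nat_diff)
qed

lemma wpt_corner: "wpt l p0 + wpt l q0 - (1, 1) = wpt l (wcorner l p0 q0)"
proof -
  have "(of_int (int (snd (wcorner l p0 q0))) :: rat) = of_int (int (snd p0) + int (snd q0) - 1)"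
    by (simp only: snd_corner)
  moreover have "(of_int (fst (wcorner l p0 q0)) / of_nat l :: rat)
      = of_int (fst p0) / of_nat l + of_int (fst q0) / of_nat l - 1"
    using l_pos by (simp add: wcorner_def field_simps)
  ultimately show ?thesis
    by (simp add: wpt_def)
qed

lemma wval_at_corner:
  "wval_at l \<rho> \<sigma> (wcorner l p0 q0) = vdeg l \<rho> \<sigma> P + vdeg l \<rho> \<sigma> Q - of_int (\<rho> + \<sigma>)"
proof -
  have "wval_at l \<rho> \<sigma> p0 = vdeg l \<rho> \<sigma> P" "wval_at l \<rho> \<sigma> q0 = vdeg l \<rho> \<sigma> Q"
    using p0 q0 by (auto simp: extreme_y_def wsupp_lead)
  then show ?thesis
    by (simp add: wval_at_def wval_def flip: wpt_corner) (simp add: algebra_simps)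
qed

lemma lead_pair_unique:
  assumes "p \<in> wsupp (lead l \<rho> \<sigma> P)" "q \<in> wsupp (lead l \<rho> \<sigma> Q)"
    "int (snd p) + int (snd q) - 1 = int (snd (wcorner l p0 q0))"
  shows "p = p0 \<and> q = q0"
proof -
  have "s * int (snd p0) \<le> s * int (snd p)" "s * int (snd q0) \<le> s * int (snd q)"
    using p0 q0 assms(1,2) by (auto simp: extreme_y_def)
  moreover have "s * int (snd p) + s * int (snd q) = s * int (snd p0) + s * int (snd q0)"
    using assms(3) by (simp add: snd_corner flip: distrib_left)
  ultimately have "s * int (snd p) = s * int (snd p0)" "s * int (snd q) = s * int (snd q0)"
    by linarith+
  with s_nonzero have "snd p = snd p0" "snd q = snd q0"
    by simp_all
  moreover have "wval_at l \<rho> \<sigma> p = wval_at l \<rho> \<sigma> p0" "wval_at l \<rho> \<sigma> q = wval_at l \<rho> \<sigma> q0"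
    using assms(1,2) p0 q0 by (auto simp: extreme_y_def wsupp_lead)
  ultimately show ?thesis
    using wval_at_inj_on_row[OF l_pos] rho_pos by (metis less_irrefl)
qed

lemma wcomm_corner:
  "wcomm l P Q (wcorner l p0 q0) = P p0 * Q q0 * of_rat
     (of_nat (snd p0) * (of_int (fst q0) / of_nat l) - of_nat (snd q0) * (of_int (fst p0) / of_nat l))"
proof -
  let ?k = "wcorner l p0 q0"
  have p0_supp: "p0 \<in> wsupp P" and q0_supp: "q0 \<in> wsupp Q"
    using p0 q0 wsupp_lead_subset unfolding extreme_y_def by blast+
  have PQ: "wmult_term l P Q ?k p q 1 = 0" if "(p, q) \<noteq> (p0, q0)" for p q
  proof (rule ccontr)
    assume "wmult_term l P Q ?k p q 1 \<noteq> 0"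
    note at_top = wmult_term_at_top[OF l_pos weight_pos fin_P fin_Q wval_at_corner this order_refl]
    from at_top(2,5) have "int (snd p) + int (snd q) - 1 = int (snd ?k)"
      by simp
    with at_top(3,4) lead_pair_unique that show False
      by blast
  qed
  have QP: "wmult_term l Q P ?k q p 1 = 0" if "(q, p) \<noteq> (q0, p0)" for p q
  proof (rule ccontr)
    assume nz: "wmult_term l Q P ?k q p 1 \<noteq> 0"
    have "wval_at l \<rho> \<sigma> ?k = vdeg l \<rho> \<sigma> Q + vdeg l \<rho> \<sigma> P - of_int (\<rho> + \<sigma>)"
      using wval_at_corner by simp
    note at_top = wmult_term_at_top[OF l_pos weight_pos fin_Q fin_P this nz order_refl]
    from at_top(2,5) have "int (snd p) + int (snd q) - 1 = int (snd ?k)"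
      by simp
    with at_top(3,4) lead_pair_unique that show False
      by blast
  qed
  have "(\<Sum>p\<in>wsupp P. \<Sum>q\<in>wsupp Q. wmult_term l P Q ?k p q 1) = wmult_term l P Q ?k p0 q0 1"
    by (rule sum_sum_eq_single[OF fin_P fin_Q p0_supp q0_supp]) (use PQ in blast)
  moreover have "(\<Sum>q\<in>wsupp Q. \<Sum>p\<in>wsupp P. wmult_term l Q P ?k q p 1)
      = wmult_term l Q P ?k q0 p0 1"
    by (rule sum_sum_eq_single[OF fin_Q fin_P q0_supp p0_supp]) (use QP in blast)
  ultimately have "wcomm l P Q ?k = wmult_term l P Q ?k p0 q0 1 - wmult_term l Q P ?k q0 p0 1"
    by (simp add: wcomm_at_top[OF l_pos weight_pos fin_P fin_Q wval_at_corner])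
  also have "\<dots> = P p0 * Q q0 * (of_nat (snd p0) * of_rat (of_int (fst q0) / of_nat l)
      - of_nat (snd q0) * of_rat (of_int (fst p0) / of_nat l))"
    using wmult_term_corner[of l P Q p0 q0] wmult_term_corner[of l Q P q0 p0]
    by (simp only: wcorner_commute) (simp add: algebra_simps)
  finally show ?thesis
    by (simp only: of_rat_diff of_rat_mult of_rat_of_nat_eq)
qed

lemma wcomm_corner_nonzero: "wcomm l P Q (wcorner l p0 q0) \<noteq> 0"
proof -
  have "P p0 \<noteq> 0" "Q q0 \<noteq> 0"
    using p0 q0 by (auto simp: extreme_y_def wsupp_lead)
  moreover have "of_nat (snd p0) * (of_int (fst q0) / of_nat l)
      - of_nat (snd q0) * (of_int (fst p0) / of_nat l) \<noteq> (0 :: rat)"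
    using not_aligned by (auto simp: aligned_def wpt_def algebra_simps)
  ultimately show ?thesis
    by (simp add: wcomm_corner)
qed

lemma wcomm_top_extreme:
  assumes "wcomm l P Q k \<noteq> 0"
    "wval_at l \<rho> \<sigma> k = vdeg l \<rho> \<sigma> P + vdeg l \<rho> \<sigma> Q - of_int (\<rho> + \<sigma>)"
  shows "s * int (snd (wcorner l p0 q0)) \<le> s * int (snd k)"
proof -
  obtain p q where pq: "p \<in> wsupp (lead l \<rho> \<sigma> P)" "q \<in> wsupp (lead l \<rho> \<sigma> Q)"
    and snd_k: "int (snd k) = int (snd p) + int (snd q) - 1"
  proof -
    consider "(\<Sum>p\<in>wsupp P. \<Sum>q\<in>wsupp Q. wmult_term l P Q k p q 1) \<noteq> 0"
      | "(\<Sum>q\<in>wsupp Q. \<Sum>p\<in>wsupp P. wmult_term l Q P k q p 1) \<noteq> 0"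
      using assms(1) unfolding wcomm_at_top[OF l_pos weight_pos fin_P fin_Q assms(2)] by force
    then show ?thesis
    proof cases
      case 1
      then obtain p q where "wmult_term l P Q k p q 1 \<noteq> 0"
        by (elim sum.not_neutral_contains_not_neutral)
      note at_top = wmult_term_at_top[OF l_pos weight_pos fin_P fin_Q assms(2) this order_refl]
      from at_top(2,5) have "int (snd k) = int (snd p) + int (snd q) - 1"
        by simp
      with at_top(3,4) that show ?thesis
        by blast
    next
      case 2
      then obtain p q where nz: "wmult_term l Q P k q p 1 \<noteq> 0"
        by (elim sum.not_neutral_contains_not_neutral)
      have "wval_at l \<rho> \<sigma> k = vdeg l \<rho> \<sigma> Q + vdeg l \<rho> \<sigma> P - of_int (\<rho> + \<sigma>)"
        using assms(2) by simp
      note at_top = wmult_term_at_top[OF l_pos weight_pos fin_Q fin_P this nz order_refl]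
      from at_top(2,5) have "int (snd k) = int (snd p) + int (snd q) - 1"
        by simp
      with at_top(3,4) that show ?thesis
        by blast
    qed
  qed
  have "s * int (snd p0) \<le> s * int (snd p)" "s * int (snd q0) \<le> s * int (snd q)"
    using p0 q0 pq by (auto simp: extreme_y_def)
  then show ?thesis
    by (simp add: snd_corner snd_k algebra_simps)
qed

text \<open>Nonvanishing at the corner shows that the bracket is not truncated to \<open>0\<close>.\<close>
lemma wbracket_corner_extreme:
  assumes "wbracket l \<rho> \<sigma> P Q = lead l \<rho> \<sigma> R"
  shows "extreme_y s (wsupp (lead l \<rho> \<sigma> R)) (wcorner l p0 q0)"
proof -
  have vdeg: "vdeg l \<rho> \<sigma> (wcomm l P Q) = vdeg l \<rho> \<sigma> P + vdeg l \<rho> \<sigma> Q - of_int (\<rho> + \<sigma>)"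
    by (rule vdeg_eqI[OF wcomm_finite[OF fin_P fin_Q] wcomm_corner_nonzero wval_at_corner])
      (rule wcomm_weight_le[OF l_pos weight_pos fin_P fin_Q])
  with wcomm_corner_nonzero have "wbracket l \<rho> \<sigma> P Q = lead l \<rho> \<sigma> (wcomm l P Q)"
    unfolding wbracket_def by (metis less_irrefl)
  with assms have "wsupp (lead l \<rho> \<sigma> R) = wsupp (lead l \<rho> \<sigma> (wcomm l P Q))"
    by simp
  also have "\<dots> = {k. wcomm l P Q k \<noteq> 0 \<and>
      wval_at l \<rho> \<sigma> k = vdeg l \<rho> \<sigma> P + vdeg l \<rho> \<sigma> Q - of_int (\<rho> + \<sigma>)}"
    by (simp add: wsupp_lead vdeg)
  finally show ?thesis
    unfolding extreme_y_def using wcomm_corner_nonzero wval_at_corner wcomm_top_extreme by auto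
qed

end

lemma bracket_extreme_point_add:
  fixes P Q R :: "int \<times> nat \<Rightarrow> 'a::field_char_0" and pt :: "(int \<times> nat \<Rightarrow> 'a) \<Rightarrow> rat \<times> rat"
  assumes "l > 0" "\<rho> > 0" "\<rho> + \<sigma> > 0" "finite (wsupp P)" "finite (wsupp Q)"
    "P \<noteq> (\<lambda>_. 0)" "Q \<noteq> (\<lambda>_. 0)" "s \<noteq> 0"
    and pt: "\<And>F k. extreme_y s (wsupp (lead l \<rho> \<sigma> F)) k \<Longrightarrow> pt F = wpt l k"
    and "\<not> aligned (pt P) (pt Q)" "wbracket l \<rho> \<sigma> P Q = lead l \<rho> \<sigma> R"
  shows "pt P + pt Q - (1, 1) = pt R"
proof -
  obtain p0 where p0: "extreme_y s (wsupp (lead l \<rho> \<sigma> P)) p0"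
    using ex_extreme_y_lead[OF assms(4,6)] by blast
  obtain q0 where q0: "extreme_y s (wsupp (lead l \<rho> \<sigma> Q)) q0"
    using ex_extreme_y_lead[OF assms(5,7)] by blast
  have "\<not> aligned (wpt l p0) (wpt l q0)"
    using assms(10) by (simp add: pt[OF p0] pt[OF q0])
  note corner = assms(1-5,8) p0 q0 this
  from pt[OF p0] pt[OF q0] pt[OF wbracket_corner_extreme[OF corner assms(11)]]
  show ?thesis
    using wpt_corner[OF corner] by simp
qed

theorem proposition2p4:
  fixes P Q R :: "int \<times> nat \<Rightarrow> 'a::field_char_0"
    and l :: nat and \<rho> \<sigma> :: int
  assumes "l > 0"
    and "is_W P" and "is_W Q" and "is_W R"
    and "P \<noteq> (\<lambda>_. 0)" and "Q \<noteq> (\<lambda>_. 0)" and "R \<noteq> (\<lambda>_. 0)"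
    and "coprime \<rho> \<sigma>" and "\<rho> + \<sigma> > 0" and "\<sigma> \<le> 0"
    and "wbracket l \<rho> \<sigma> P Q = lead l \<rho> \<sigma> R"
  shows "(\<not> aligned (wst l \<rho> \<sigma> P) (wst l \<rho> \<sigma> Q) \<longrightarrow>
            wst l \<rho> \<sigma> P + wst l \<rho> \<sigma> Q - (1, 1) = wst l \<rho> \<sigma> R)
       \<and> (\<not> aligned (wen l \<rho> \<sigma> P) (wen l \<rho> \<sigma> Q) \<longrightarrow>
            wen l \<rho> \<sigma> P + wen l \<rho> \<sigma> Q - (1, 1) = wen l \<rho> \<sigma> R)"
proof -
  have rho_pos: "\<rho> > 0"
    using assms(9,10) by linarith
  have fin: "finite (wsupp P)" "finite (wsupp Q)"
    using assms(2,3) by (simp_all add: is_W_def)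
  note bracket = bracket_extreme_point_add[OF assms(1) rho_pos assms(9) fin assms(5,6)]
  show ?thesis
    using bracket[where pt = "wst l \<rho> \<sigma>", OF one_neq_zero wst_eq_extreme[OF rho_pos assms(9)]]
      bracket[where pt = "wen l \<rho> \<sigma>", OF neg_one_neq_zero wen_eq_extreme[OF rho_pos assms(9)]]
      assms(11)
    by blast
qed

end
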